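(* Let $\mathcal X$ be a countable set, $\mathcal Y$ a finite set, $\rho$ a probability distribution on $\mathcal X$, and for each $x$ let $\mu(\cdot|x)$ and $\pi_{\mathrm{ref}}(\cdot|x)$ be probability distributions on $\mathcal Y$ with $\mu(y|x)>0$ and $\pi_{\mathrm{ref}}(y|x)>0$ for all $y$. Let $r:\mathcal X\times\mathcal Y\to\mathbb R$, $\tau>0$, and define for policies $\pi$ (with $\pi(y|x)>0$) and functions $V:\mathcal X\to\mathbb R$ $$\mathcal L(\pi,V)=\tfrac12\,\mathbb E_{x\sim\rho,\,y\sim\mu(\cdot|x)}\Big[\Big(r(x,y)-V(x)-\tau\log\tfrac{\pi(y|x)}{\pi_{\mathrm{ref}}(y|x)}\Big)^2\Big],$$ and $V^\pi(x)=\mathbb E_{y\sim\mu(\cdot|x)}\big[r(x,y)-\tau\log\frac{\pi(y|x)}{\pi_{\mathrm{ref}}(y|x)}\big]$ (the minimiser of $V\mapsto\mathcal L(\pi,V)$). Let $V^*(x)=\tau\log\mathbb E_{y\sim\pi_{\mathrm{ref}}(\cdot|x)}[e^{r(x,y)/\tau}]$ and $\pi^*(y|x)=\pi_{\mathrm{ref}}(y|x)e^{(r(x,y)-V^*(x))/\tau}$. Fix $V:\mathcal X\to\mathbb R$ and let $\pi_V$ be a minimiser of $\pi\mapsto\mathcal L(\pi,V)$ over policies with $\pi_V(y|x)>0$ for all $x,y$. Then for every $x\in\operatorname{supp}\rho$: (i) $\pi_V(y|x)\propto\pi_{\mathrm{ref}}(y|x)\exp\Big(\tfrac1\tau\Big[r(x,y)-\tfrac{\pi_V(y|x)}{\mu(y|x)}\big(V^{\pi_V}(x)-V(x)\big)\Big]\Big)$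 as a function of $y$; (ii) for all $y\in\mathcal Y$, $$\Big|\log\frac{\pi_V(y|x)}{\pi^*(y|x)}\Big|\le\frac2\tau\max_{y'\in\mathcal Y}\Big|\big(V^{\pi_V}(x)-V(x)\big)\Big(1-\frac{\pi_V(y'|x)}{\mu(y'|x)}\Big)\Big|.$$
   Context: $\pi^*$ is the optimal KL-regularised policy (maximiser of $\mathbb E_{x\sim\rho,y\sim\pi}[r(x,y)]-\tau\,\mathbb E_{x\sim\rho}D_{\mathrm{KL}}(\pi(\cdot|x)\|\pi_{\mathrm{ref}}(\cdot|x))$); $\mu$ is the data-generating behaviour distribution. *)

theory Defs
  imports "HOL-Probability.Probability"
begin

definition pos_policy :: "('x \<Rightarrow> 'y::finite \<Rightarrow> real) \<Rightarrow> bool" where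
  "pos_policy p \<longleftrightarrow> (\<forall>x y. p x y > 0) \<and> (\<forall>x. (\<Sum>y\<in>UNIV. p x y) = 1)"

definition lossL ::
  "'x pmf \<Rightarrow> ('x \<Rightarrow> 'y::finite \<Rightarrow> real) \<Rightarrow> ('x \<Rightarrow> 'y \<Rightarrow> real) \<Rightarrow> ('x \<Rightarrow> 'y \<Rightarrow> real) \<Rightarrow> real
    \<Rightarrow> ('x \<Rightarrow> 'y \<Rightarrow> real) \<Rightarrow> ('x \<Rightarrow> real) \<Rightarrow> ennreal" where
  "lossL rho mu pref r \<tau> p V =
     (\<integral>\<^sup>+ x. ennreal ((1/2) * (\<Sum>y\<in>UNIV. mu x y *
         (r x y - V x - \<tau> * ln (p x y / pref x y))\<^sup>2)) \<partial>measure_pmf rho)"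

definition Vpi ::
  "('x \<Rightarrow> 'y::finite \<Rightarrow> real) \<Rightarrow> ('x \<Rightarrow> 'y \<Rightarrow> real) \<Rightarrow> ('x \<Rightarrow> 'y \<Rightarrow> real) \<Rightarrow> real
    \<Rightarrow> ('x \<Rightarrow> 'y \<Rightarrow> real) \<Rightarrow> 'x \<Rightarrow> real" where
  "Vpi mu pref r \<tau> p x = (\<Sum>y\<in>UNIV. mu x y * (r x y - \<tau> * ln (p x y / pref x y)))"

definition Vstar ::
  "('x \<Rightarrow> 'y::finite \<Rightarrow> real) \<Rightarrow> ('x \<Rightarrow> 'y \<Rightarrow> real) \<Rightarrow> real \<Rightarrow> 'x \<Rightarrow> real" where
  "Vstar pref r \<tau> x = \<tau> * ln (\<Sum>y\<in>UNIV. pref x y * exp (r x y / \<tau>))"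

definition pistar ::
  "('x \<Rightarrow> 'y::finite \<Rightarrow> real) \<Rightarrow> ('x \<Rightarrow> 'y \<Rightarrow> real) \<Rightarrow> real \<Rightarrow> 'x \<Rightarrow> 'y \<Rightarrow> real" where
  "pistar pref r \<tau> x y = pref x y * exp ((r x y - Vstar pref r \<tau> x) / \<tau>)"

end

theory Submission
  imports Defs
begin

text \<open>Since \<open>\<rho>\<close> charges \<open>x\<close>, changing \<open>\<pi>\<^sub>V\<close> at \<open>x\<close> alone cannot lower the loss, so
  \<open>\<pi>\<^sub>V(\<cdot>|x)\<close> minimises the per-state loss over the open simplex. Differentiating along the
  directions \<open>e\<^sub>y - e\<^sub>y\<^sub>'\<close> shows that \<open>\<mu>(y) d(y) / \<pi>\<^sub>V(y)\<close> is independent of \<open>y\<close>, where \<open>d\<close> is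
  the residual \<open>r - V - \<tau> log (\<pi>\<^sub>V / \<pi>\<^sub>r\<^sub>e\<^sub>f)\<close>; summing \<open>\<mu> d\<close> identifies the constant as
  \<open>D = V\<^sup>\<pi>(x) - V(x)\<close>. Thus \<open>\<pi>\<^sub>V\<close> is a Gibbs policy whose exponent is shifted by
  \<open>V(x) + a(y)\<close> with \<open>a(y) = \<pi>\<^sub>V(y)/\<mu>(y) D\<close>, which is (i). Normalisation then pins the log-partition
  function \<open>V\<^sup>*(x)\<close> to within \<open>max |D - a|\<close> of \<open>V(x) + D\<close>, and (ii) follows by the triangle
  inequality.\<close>

lemma nn_integral_pmf_split_point:
  fixes f :: "'a \<Rightarrow> real"
  shows "(\<integral>\<^sup>+z. ennreal (f z) \<partial>measure_pmf M)
       = (\<integral>\<^sup>+z. ennreal ((f(x := 0)) z) \<partial>measure_pmf M) + ennreal (f x) * pmf M x"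
proof -
  have "(\<integral>\<^sup>+z. ennreal (f z) \<partial>measure_pmf M)
      = (\<integral>\<^sup>+z. ennreal ((f(x := 0)) z) + ennreal (f x) * indicator {x} z \<partial>measure_pmf M)"
    by (intro nn_integral_cong) (auto split: split_indicator)
  also have "\<dots> = (\<integral>\<^sup>+z. ennreal ((f(x := 0)) z) \<partial>measure_pmf M) + ennreal (f x) * pmf M x"
    by (subst nn_integral_add) (auto simp: nn_integral_cmult_indicator emeasure_pmf_single)
  finally show ?thesis .
qed

lemma nn_integral_pmf_le_update_imp_le:
  fixes f :: "'a \<Rightarrow> real"
  assumes x: "x \<in> set_pmf M" and fin: "(\<integral>\<^sup>+z. ennreal (f z) \<partial>measure_pmf M) \<noteq> \<infinity>"
    and le: "(\<integral>\<^sup>+z. ennreal (f z) \<partial>measure_pmf M) \<le> (\<integral>\<^sup>+z. ennreal ((f(x := c)) z) \<partial>measure_pmf M)"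
    and c: "c \<ge> 0"
  shows "f x \<le> c"
proof -
  define R where "R = (\<integral>\<^sup>+z. ennreal ((f(x := 0)) z) \<partial>measure_pmf M)"
  have split_f: "(\<integral>\<^sup>+z. ennreal (f z) \<partial>measure_pmf M) = R + ennreal (f x) * pmf M x"
    and split_c: "(\<integral>\<^sup>+z. ennreal ((f(x := c)) z) \<partial>measure_pmf M) = R + ennreal c * pmf M x"
    using nn_integral_pmf_split_point[where f = f]
      nn_integral_pmf_split_point[where f = "f(x := c)" and x = x]
    by (simp_all add: R_def)
  have "R \<noteq> \<infinity>" using fin split_f by auto
  moreover have "R + ennreal (f x) * pmf M x \<le> R + ennreal c * pmf M x"
    using le unfolding split_f split_c .
  ultimately have "ennreal (f x) * pmf M x \<le> ennreal c * pmf M x"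
    by (simp add: ennreal_add_left_cancel_le)
  moreover have "pmf M x > 0" using x by (simp add: pmf_positive)
  ultimately have "ennreal (f x) \<le> ennreal c"
    by (subst (asm) (1 2) mult.commute) (simp add: ennreal_mult_le_mult_iff)
  then show ?thesis using c by (simp add: ennreal_le_iff)
qed

lemma simplex_min_derivatives_eq:
  fixes p :: "'y::finite \<Rightarrow> real" and h :: "'y \<Rightarrow> real \<Rightarrow> real" and h' :: "'y \<Rightarrow> real"
  assumes p_pos: "\<And>y. p y > 0" and p_sum: "(\<Sum>y\<in>UNIV. p y) = 1"
    and deriv: "\<And>y. (h y has_real_derivative h' y) (at (p y))"
    and min: "\<And>q. (\<And>y. q y > 0) \<Longrightarrow> (\<Sum>y\<in>UNIV. q y) = 1 \<Longrightarrow>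
                (\<Sum>y\<in>UNIV. h y (p y)) \<le> (\<Sum>y\<in>UNIV. h y (q y))"
  shows "h' y1 = h' y2"
proof (cases "y1 = y2")
  case False
  define e where "e y = (of_bool (y = y1) - of_bool (y = y2) :: real)" for y :: 'y
  define \<phi> where "\<phi> t = (\<Sum>y\<in>UNIV. h y (p y + t * e y))" for t
  have "((\<lambda>t. h y (p y + t * e y)) has_real_derivative h' y * e y) (at 0)" for y
  proof -
    have "(h y has_real_derivative h' y) (at ((\<lambda>t. p y + t * e y) 0))"
      using deriv by simp
    moreover have "((\<lambda>t. p y + t * e y) has_real_derivative e y) (at 0)"
      by (auto intro!: derivative_eq_intros)
    ultimately show ?thesis by (rule DERIV_chain2)
  qed
  then have "(\<phi> has_real_derivative (\<Sum>y\<in>UNIV. h' y * e y)) (at 0)"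
    unfolding \<phi>_def by (rule DERIV_sum)
  moreover have "(\<Sum>y\<in>UNIV. h' y * e y) = h' y1 - h' y2"
    using False by (simp add: e_def algebra_simps sum_subtractf if_distrib cong: if_cong)
  moreover have "\<phi> 0 \<le> \<phi> t" if "\<bar>0 - t\<bar> < min (p y1) (p y2)" for t
  proof -
    have "p y + t * e y > 0" for y
    proof -
      consider "y = y1" | "y = y2" | "y \<noteq> y1" "y \<noteq> y2" by blast
      then show ?thesis
        using that p_pos[of y] False by cases (auto simp: e_def)
    qed
    moreover have "(\<Sum>y\<in>UNIV. e y) = 0"
      by (simp add: e_def sum_subtractf)
    then have "(\<Sum>y\<in>UNIV. p y + t * e y) = 1"
      by (simp add: sum.distrib p_sum flip: sum_distrib_left)
    ultimately show ?thesis
      unfolding \<phi>_def using min[of "\<lambda>y. p y + t * e y"] by simp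
  qed
  ultimately have "h' y1 - h' y2 = 0"
    using p_pos by (intro DERIV_local_min[of \<phi> _ 0 "min (p y1) (p y2)"]) auto
  then show ?thesis by simp
qed simp

lemma abs_ln_sum_minus_le_of_normalised:
  fixes w b :: "'y::finite \<Rightarrow> real"
  assumes w_pos: "\<And>y. w y > 0" and normalised: "(\<Sum>y\<in>UNIV. w y * exp (- b y)) = 1"
    and close: "\<And>y. \<bar>b y - \<beta>\<bar> \<le> B"
  shows "\<bar>ln (\<Sum>y\<in>UNIV. w y) - \<beta>\<bar> \<le> B"
proof -
  define S where "S = (\<Sum>y\<in>UNIV. w y)"
  have S_pos: "S > 0"
    unfolding S_def using w_pos by (simp add: sum_pos)
  have exp_lower: "exp (- (\<beta> + B)) \<le> exp (- b y)"
    and exp_upper: "exp (- b y) \<le> exp (- (\<beta> - B))" for y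
    using close[of y] unfolding exp_le_cancel_iff abs_le_iff by linarith+
  have "S * exp (- (\<beta> + B)) = (\<Sum>y\<in>UNIV. w y * exp (- (\<beta> + B)))"
    by (simp add: S_def sum_distrib_right)
  also have "\<dots> \<le> 1"
    unfolding normalised[symmetric]
    by (intro sum_mono mult_left_mono exp_lower) (simp add: w_pos less_imp_le)
  finally have "ln S - (\<beta> + B) \<le> 0"
    using S_pos by (simp add: ln_mult_pos flip: ln_le_zero_iff)
  moreover have "1 \<le> (\<Sum>y\<in>UNIV. w y * exp (- (\<beta> - B)))"
    unfolding normalised[symmetric]
    by (intro sum_mono mult_left_mono exp_upper) (simp add: w_pos less_imp_le)
  then have "1 \<le> S * exp (- (\<beta> - B))"
    by (simp add: S_def sum_distrib_right)
  then have "0 \<le> ln S - (\<beta> - B)"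
    using S_pos by (simp add: ln_mult_pos flip: ln_ge_zero_iff)
  ultimately show ?thesis
    unfolding S_def by linarith
qed

definition state_loss ::
  "('x \<Rightarrow> 'y::finite \<Rightarrow> real) \<Rightarrow> ('x \<Rightarrow> 'y \<Rightarrow> real) \<Rightarrow> ('x \<Rightarrow> 'y \<Rightarrow> real) \<Rightarrow> real
    \<Rightarrow> ('x \<Rightarrow> real) \<Rightarrow> 'x \<Rightarrow> ('y \<Rightarrow> real) \<Rightarrow> real" where
  "state_loss mu pref r \<tau> V x q =
     (1/2) * (\<Sum>y\<in>UNIV. mu x y * (r x y - V x - \<tau> * ln (q y / pref x y))\<^sup>2)"

lemma lossL_eq_nn_integral_state_loss:
  "lossL rho mu pref r \<tau> p V = (\<integral>\<^sup>+x. ennreal (state_loss mu pref r \<tau> V x (p x)) \<partial>measure_pmf rho)"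
  by (simp add: lossL_def state_loss_def)

lemma state_loss_nonneg: "(\<And>y. mu x y \<ge> 0) \<Longrightarrow> state_loss mu pref r \<tau> V x q \<ge> 0"
  by (simp add: state_loss_def sum_nonneg)

lemma lossL_minimiser_state_loss_le:
  assumes mu_nonneg: "\<And>y. mu x y \<ge> 0" and piV: "pos_policy piV"
    and piV_min: "\<And>p. pos_policy p \<Longrightarrow> lossL rho mu pref r \<tau> piV V \<le> lossL rho mu pref r \<tau> p V"
    and piV_fin: "lossL rho mu pref r \<tau> piV V \<noteq> \<infinity>"
    and x: "x \<in> set_pmf rho"
    and q_pos: "\<And>y. q y > 0" and q_sum: "(\<Sum>y\<in>UNIV. q y) = 1"
  shows "state_loss mu pref r \<tau> V x (piV x) \<le> state_loss mu pref r \<tau> V x q"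
proof -
  define f where "f z = state_loss mu pref r \<tau> V z (piV z)" for z
  have "f x \<le> state_loss mu pref r \<tau> V x q"
  proof (rule nn_integral_pmf_le_update_imp_le[OF x])
    show "(\<integral>\<^sup>+z. ennreal (f z) \<partial>measure_pmf rho) \<noteq> \<infinity>"
      using piV_fin unfolding lossL_eq_nn_integral_state_loss f_def .
    have "pos_policy (piV(x := q))"
      using piV q_pos q_sum by (auto simp: pos_policy_def)
    then have "lossL rho mu pref r \<tau> piV V \<le> lossL rho mu pref r \<tau> (piV(x := q)) V"
      by (rule piV_min)
    also have "\<dots> = (\<integral>\<^sup>+z. ennreal ((f(x := state_loss mu pref r \<tau> V x q)) z) \<partial>measure_pmf rho)"
      unfolding lossL_eq_nn_integral_state_loss f_def by (intro nn_integral_cong) auto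
    finally show "(\<integral>\<^sup>+z. ennreal (f z) \<partial>measure_pmf rho)
        \<le> (\<integral>\<^sup>+z. ennreal ((f(x := state_loss mu pref r \<tau> V x q)) z) \<partial>measure_pmf rho)"
      unfolding lossL_eq_nn_integral_state_loss f_def .
    show "state_loss mu pref r \<tau> V x q \<ge> 0"
      using mu_nonneg by (rule state_loss_nonneg)
  qed
  then show ?thesis
    by (simp add: f_def)
qed

lemma state_loss_min_residual:
  fixes p :: "'x \<Rightarrow> 'y::finite \<Rightarrow> real"
  assumes mu_pos: "\<And>y. mu x y > 0" and mu_sum: "(\<Sum>y\<in>UNIV. mu x y) = 1"
    and pref_pos: "\<And>y. pref x y > 0" and tau: "\<tau> > 0"
    and p_pos: "\<And>y. p x y > 0" and p_sum: "(\<Sum>y\<in>UNIV. p x y) = 1"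
    and min: "\<And>q. (\<And>y. q y > 0) \<Longrightarrow> (\<Sum>y\<in>UNIV. q y) = 1 \<Longrightarrow>
                state_loss mu pref r \<tau> V x (p x) \<le> state_loss mu pref r \<tau> V x q"
  shows "r x y - V x - \<tau> * ln (p x y / pref x y) = p x y / mu x y * (Vpi mu pref r \<tau> p x - V x)"
proof -
  define d where "d y = r x y - V x - \<tau> * ln (p x y / pref x y)" for y
  define h where "h y s = mu x y * (r x y - V x - \<tau> * ln (s / pref x y))\<^sup>2 / 2" for y s
  have state_loss_eq: "state_loss mu pref r \<tau> V x q = (\<Sum>y\<in>UNIV. h y (q y))" for q
    by (simp add: state_loss_def h_def sum_divide_distrib)
  have "(h y has_real_derivative - \<tau> * (mu x y * d y / p x y)) (at (p x y))" for y
    unfolding h_def d_def using p_pos[of y] pref_pos[of y]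
    by - (rule derivative_eq_intros refl | simp)+
  then have "- \<tau> * (mu x y * d y / p x y) = - \<tau> * (mu x y' * d y' / p x y')" for y'
    by (rule simplex_min_derivatives_eq[where p = "p x", OF p_pos p_sum])
      (use min in \<open>simp add: state_loss_eq\<close>)
  then have ratio_eq: "mu x y' * d y' / p x y' = mu x y * d y / p x y" for y'
    using tau mult_cancel_left[of "- \<tau>"] by (metis neg_0_equal_iff_equal less_irrefl)
  \<comment> \<open>Summing \<open>\<mu> d = k p\<close> over the simplex identifies the Lagrange multiplier \<open>k\<close> as \<open>V\<^sup>\<pi>(x) - V(x)\<close>.\<close>
  define k where "k = mu x y * d y / p x y"
  have ratio_const: "mu x y' * d y' = k * p x y'" for y'
    using ratio_eq[of y'] p_pos[of y'] by (simp add: k_def divide_eq_eq)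
  have "(\<Sum>y'\<in>UNIV. mu x y' * d y')
      = (\<Sum>y'\<in>UNIV. mu x y' * (r x y' - \<tau> * ln (p x y' / pref x y')) - V x * mu x y')"
    unfolding d_def by (simp add: algebra_simps)
  also have "\<dots> = Vpi mu pref r \<tau> p x - V x"
    by (simp add: Vpi_def sum_subtractf mu_sum flip: sum_distrib_left)
  finally have "Vpi mu pref r \<tau> p x - V x = (\<Sum>y'\<in>UNIV. mu x y' * d y')" ..
  also have "\<dots> = k"
    by (simp add: ratio_const p_sum flip: sum_distrib_left)
  finally show ?thesis
    using mu_pos[of y] p_pos[of y] by (simp add: k_def d_def field_simps)
qed

lemma state_loss_min_gibbs_form:
  fixes p :: "'x \<Rightarrow> 'y::finite \<Rightarrow> real"
  assumes mu_pos: "\<And>y. mu x y > 0" and mu_sum: "(\<Sum>y\<in>UNIV. mu x y) = 1"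
    and pref_pos: "\<And>y. pref x y > 0" and tau: "\<tau> > 0"
    and p_pos: "\<And>y. p x y > 0" and p_sum: "(\<Sum>y\<in>UNIV. p x y) = 1"
    and min: "\<And>q. (\<And>y. q y > 0) \<Longrightarrow> (\<Sum>y\<in>UNIV. q y) = 1 \<Longrightarrow>
                state_loss mu pref r \<tau> V x (p x) \<le> state_loss mu pref r \<tau> V x q"
  shows "p x y = pref x y *
           exp ((r x y - (V x + p x y / mu x y * (Vpi mu pref r \<tau> p x - V x))) / \<tau>)"
proof -
  have "ln (p x y / pref x y) = (r x y - (V x + p x y / mu x y * (Vpi mu pref r \<tau> p x - V x))) / \<tau>"
  proof -
    have "r x y - V x - \<tau> * ln (p x y / pref x y) = p x y / mu x y * (Vpi mu pref r \<tau> p x - V x)"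
      using assms by (rule state_loss_min_residual)
    then show ?thesis
      using tau by (simp add: field_simps)
  qed
  then have "p x y / pref x y = exp ((r x y - (V x + p x y / mu x y * (Vpi mu pref r \<tau> p x - V x))) / \<tau>)"
    using p_pos[of y] pref_pos[of y] by (metis divide_pos_pos exp_ln)
  then show ?thesis
    using pref_pos[of y] by (simp add: divide_eq_eq mult.commute)
qed

lemma abs_Vstar_minus_le:
  fixes p c :: "'y::finite \<Rightarrow> real"
  assumes tau: "\<tau> > 0" and pref_pos: "\<And>y. pref x y > 0" and p_sum: "(\<Sum>y\<in>UNIV. p y) = 1"
    and gibbs: "\<And>y. p y = pref x y * exp ((r x y - c y) / \<tau>)"
    and close: "\<And>y. \<bar>c y - \<beta>\<bar> \<le> B"
  shows "\<bar>Vstar pref r \<tau> x - \<beta>\<bar> \<le> B"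
proof -
  have "\<bar>ln (\<Sum>y\<in>UNIV. pref x y * exp (r x y / \<tau>)) - \<beta> / \<tau>\<bar> \<le> B / \<tau>"
  proof (rule abs_ln_sum_minus_le_of_normalised)
    show "pref x y * exp (r x y / \<tau>) > 0" for y
      using pref_pos[of y] by simp
    have "pref x y * exp (r x y / \<tau>) * exp (- (c y / \<tau>)) = p y" for y
      by (simp add: gibbs mult.assoc diff_divide_distrib flip: exp_add)
    then show "(\<Sum>y\<in>UNIV. pref x y * exp (r x y / \<tau>) * exp (- (c y / \<tau>))) = 1"
      by (simp add: p_sum)
    show "\<bar>c y / \<tau> - \<beta> / \<tau>\<bar> \<le> B / \<tau>" for y
      using close[of y] tau by (simp add: abs_divide divide_right_mono flip: diff_divide_distrib)
  qed
  moreover have "Vstar pref r \<tau> x - \<beta> = \<tau> * (ln (\<Sum>y\<in>UNIV. pref x y * exp (r x y / \<tau>)) - \<beta> / \<tau>)"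
    using tau by (simp add: Vstar_def right_diff_distrib)
  ultimately show ?thesis
    using tau by (simp add: abs_mult pos_le_divide_eq mult.commute)
qed

lemma ln_div_pistar:
  assumes "pref x y > 0" and "p = pref x y * exp ((r x y - c) / \<tau>)"
  shows "ln (p / pistar pref r \<tau> x y) = (Vstar pref r \<tau> x - c) / \<tau>"
proof -
  have "p / pistar pref r \<tau> x y = exp ((r x y - c) / \<tau> - (r x y - Vstar pref r \<tau> x) / \<tau>)"
    using assms by (simp add: pistar_def exp_diff)
  also have "(r x y - c) / \<tau> - (r x y - Vstar pref r \<tau> x) / \<tau> = (Vstar pref r \<tau> x - c) / \<tau>"
    by (simp add: diff_divide_distrib)
  finally show ?thesis
    by simp
qed

theorem proposition1:
  fixes rho :: "'x::countable pmf"
    and mu pref r piV :: "'x \<Rightarrow> 'y::finite \<Rightarrow> real"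
    and \<tau> :: real
    and V :: "'x \<Rightarrow> real"
  assumes mu: "pos_policy mu"
    and pref: "pos_policy pref"
    and tau: "\<tau> > 0"
    and piV: "pos_policy piV"
    and piV_min: "\<And>p. pos_policy p \<Longrightarrow> lossL rho mu pref r \<tau> piV V \<le> lossL rho mu pref r \<tau> p V"
    and piV_fin: "lossL rho mu pref r \<tau> piV V \<noteq> \<infinity>"
    and x: "x \<in> set_pmf rho"
  shows "(\<exists>c. \<forall>y. piV x y = c * pref x y *
            exp ((1/\<tau>) * (r x y - piV x y / mu x y * (Vpi mu pref r \<tau> piV x - V x))))
       \<and> (\<forall>y. \<bar>ln (piV x y / pistar pref r \<tau> x y)\<bar>
              \<le> (2/\<tau>) * Max (range (\<lambda>y'. \<bar>(Vpi mu pref r \<tau> piV x - V x) * (1 - piV x y' / mu x y')\<bar>)))"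
proof -
  define D where "D = Vpi mu pref r \<tau> piV x - V x"
  define a where "a y = piV x y / mu x y * D" for y
  define B where "B = Max (range (\<lambda>y'. \<bar>D * (1 - piV x y' / mu x y')\<bar>))"
  have pref_pos: "\<And>y. pref x y > 0" and piV_sum: "(\<Sum>y\<in>UNIV. piV x y) = 1"
    using pref piV by (auto simp: pos_policy_def)
  have gibbs: "piV x y = pref x y * exp ((r x y - (V x + a y)) / \<tau>)" for y
    unfolding a_def D_def
    using mu piV tau pref_pos lossL_minimiser_state_loss_le[OF _ piV piV_min piV_fin x]
    by (intro state_loss_min_gibbs_form) (auto simp: pos_policy_def less_imp_le)
  have scaled: "piV x y = exp (- V x / \<tau>) * pref x y * exp ((1/\<tau>) * (r x y - a y))" for y
    using tau by (subst gibbs) (simp add: diff_divide_distrib add_divide_distrib flip: exp_add)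
  have a_close: "\<bar>(V x + a y) - (V x + D)\<bar> \<le> B" for y
  proof -
    have "(V x + a y) - (V x + D) = - (D * (1 - piV x y / mu x y))"
      by (simp add: a_def algebra_simps)
    then show ?thesis
      unfolding B_def by (simp only: abs_minus_cancel) (rule Max_ge; simp)
  qed
  have Vstar_close: "\<bar>Vstar pref r \<tau> x - (V x + D)\<bar> \<le> B"
    using tau pref_pos piV_sum gibbs a_close by (rule abs_Vstar_minus_le)
  have log_ratio_bound: "\<bar>ln (piV x y / pistar pref r \<tau> x y)\<bar> \<le> (2/\<tau>) * B" for y
  proof -
    have "\<bar>Vstar pref r \<tau> x - (V x + a y)\<bar> \<le> 2 * B"
      using Vstar_close a_close[of y] unfolding abs_le_iff by linarith
    then have "\<bar>Vstar pref r \<tau> x - (V x + a y)\<bar> / \<tau> \<le> 2 * B / \<tau>"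
      using tau by (simp add: divide_right_mono)
    moreover have "ln (piV x y / pistar pref r \<tau> x y) = (Vstar pref r \<tau> x - (V x + a y)) / \<tau>"
      using pref_pos gibbs by (rule ln_div_pistar)
    ultimately show ?thesis
      using tau by (simp add: abs_divide)
  qed
  show ?thesis
    using scaled log_ratio_bound unfolding a_def B_def D_def by blast
qed

end
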